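(* Let $p$ be an odd prime, $\alpha>1$ an integer with $\gcd(p,\alpha)=1$, $\gamma=\operatorname{ord}_p(\alpha)$, and let $n\ge1$, $s\geq 0$, $t\geq 1$ be integers. Then $$S_p^n(s\gamma p^t)\leq 2 s\gamma\, t^{n-1}\left(\frac{p+1}{2}\right)^t .$$
   Context: A base-$p$ digit $d\in\{0,\dots,p-1\}$ is called small if $d<p/2$ and large otherwise. For integers $a,n\ge1$, $S_p^n(a)=\#\{0\le s<a : \text{the base-}p\text{ representation of }\alpha^s\text{ contains fewer than } n \text{ large digits}\}$ (this depends on the fixed $\alpha$). *)

theory Defs
  imports Complex_Main "HOL-Number_Theory.Number_Theory"
begin

definition digit :: "nat \<Rightarrow> nat \<Rightarrow> nat \<Rightarrow> nat" where
  "digit p m i = (m div p ^ i) mod p"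

definition large_digit :: "nat \<Rightarrow> nat \<Rightarrow> bool" where
  "large_digit p d \<longleftrightarrow> real d \<ge> real p / 2"

text \<open>Number of large digits in the base-p representation of m
  (positions i with p^i \<le> m are exactly the positions of the representation).\<close>
definition num_large_digits :: "nat \<Rightarrow> nat \<Rightarrow> nat" where
  "num_large_digits p m = card {i. p ^ i \<le> m \<and> large_digit p (digit p m i)}"

definition S :: "nat \<Rightarrow> nat \<Rightarrow> nat \<Rightarrow> nat \<Rightarrow> nat" where
  "S p \<alpha> n a = card {s. s < a \<and> num_large_digits p (\<alpha> ^ s) < n}"

end

theory Submission
  imports Defs
begin

text \<open>Let \<open>\<gamma> = ord p \<alpha>\<close>, \<open>u = \<alpha>^\<gamma>\<close>, and let \<open>p^e\<close> be the exact power of \<open>p\<close> dividing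
  \<open>u - 1\<close>. Lifting the exponent gives \<open>u^d \<noteq> 1 (mod p^(e+t))\<close> for \<open>0 < d < p^t\<close>. All the
  powers \<open>\<alpha>^(b + \<gamma> q)\<close> agree modulo \<open>p^e\<close>, so for \<open>p^t\<close> consecutive values of \<open>q\<close> their
  digit windows at positions \<open>e, \<dots>, e + t - 1\<close> are pairwise distinct. Hence an exponent
  \<open>j < s \<gamma> p^t\<close> is determined by \<open>j mod \<gamma>\<close>, by \<open>j div (\<gamma> p^t)\<close> and by the window of \<open>\<alpha>^j\<close>,
  which has fewer than \<open>n\<close> large digits whenever \<open>\<alpha>^j\<close> does. There are at most
  \<open>((p+1)/2)^t\<close> times \<open>\<Sum>k<n. t choose k \<le> 2 t^(n-1)\<close> such windows, as each digit
  position offers at most \<open>(p+1)/2\<close> small and at most \<open>(p+1)/2\<close> large digits.\<close>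

lemma geometric_sum_cong_of_cong_one:
  fixes u m :: int
  assumes "[u = 1] (mod m)"
  shows "[(\<Sum>i<d. u ^ i) = int d] (mod m)"
proof -
  have "[(\<Sum>i<d. u ^ i) = (\<Sum>i<d. 1)] (mod m)"
    by (intro cong_sum) (metis assms cong_pow power_one)
  then show ?thesis by simp
qed

lemma power_cong_first_order:
  fixes u :: int
  shows "[u ^ i = 1 + int i * (u - 1)] (mod (u - 1)\<^sup>2)"
proof (induction i)
  case (Suc i)
  have "[u ^ Suc i = (1 + int i * (u - 1)) * u] (mod (u - 1)\<^sup>2)"
    using Suc by (simp add: cong_mult mult.commute)
  moreover have "(1 + int i * (u - 1)) * u = 1 + int (Suc i) * (u - 1) + int i * (u - 1)\<^sup>2"
    by (simp add: algebra_simps power2_eq_square)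
  ultimately show ?case
    by (metis cong_add_lcancel_0 cong_mult_self_right cong_trans)
qed simp

lemma geometric_sum_odd_cong_mod_square:
  fixes p :: nat and u :: int
  assumes "odd p" "int p dvd u - 1"
  shows "[(\<Sum>i<p. u ^ i) = int p] (mod int p ^ 2)"
proof -
  have "[(\<Sum>i<p. u ^ i) = (\<Sum>i<p. 1 + int i * (u - 1))] (mod (u - 1)\<^sup>2)"
    by (intro cong_sum power_cong_first_order)
  then have "[(\<Sum>i<p. u ^ i) = (\<Sum>i<p. 1 + int i * (u - 1))] (mod int p ^ 2)"
    using assms(2) cong_dvd_modulus by (metis dvd_power_same)
  moreover have "(\<Sum>i<p. 1 + int i * (u - 1)) = int p + int (\<Sum>i<p. i) * (u - 1)"
    by (simp add: sum.distrib sum_distrib_right)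
  moreover have "int p dvd int (\<Sum>i<p. i)"
  proof -
    have "(\<Sum>i<p. i) = p * ((p - 1) div 2)"
      using assms(1) Sum_Ico_nat[of 0 p] by (auto simp: atLeast0LessThan elim!: oddE)
    then show ?thesis by simp
  qed
  then have "int p ^ 2 dvd int (\<Sum>i<p. i) * (u - 1)"
    using assms(2) by (simp add: power2_eq_square mult_dvd_mono)
  ultimately show ?thesis
    by (metis cong_add_lcancel_0 cong_iff_dvd_diff cong_trans diff_zero)
qed

lemma multiplicity_pow_sub_one_coprime_exp:
  fixes p d :: nat and u :: int
  assumes "prime p" "int p dvd u - 1" "\<not> p dvd d"
  shows "multiplicity (int p) (u ^ d - 1) = multiplicity (int p) (u - 1)"
proof -
  have "[(\<Sum>i<d. u ^ i) = int d] (mod int p)"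
    using assms(2) by (intro geometric_sum_cong_of_cong_one) (simp add: cong_iff_dvd_diff cong_sym_eq)
  then have "\<not> int p dvd (\<Sum>i<d. u ^ i)"
    using assms(3) cong_dvd_iff by fastforce
  then have "multiplicity (int p) ((\<Sum>i<d. u ^ i) * (u - 1)) = multiplicity (int p) (u - 1)"
    using assms(1) by (intro multiplicity_prime_elem_times_other) auto
  then show ?thesis
    by (simp add: power_diff_1_eq mult.commute)
qed

lemma multiplicity_pow_prime_sub_one:
  fixes p :: nat and u :: int
  assumes "prime p" "odd p" "int p dvd u - 1" "u \<noteq> 1"
  shows "multiplicity (int p) (u ^ p - 1) = Suc (multiplicity (int p) (u - 1))"
proof -
  obtain k where k: "(\<Sum>i<p. u ^ i) - int p = int p ^ 2 * k"
    using geometric_sum_odd_cong_mod_square[OF assms(2,3)] by (metis cong_iff_dvd_diff dvdE)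
  define s where "s = 1 + int p * k"
  have sum_eq: "(\<Sum>i<p. u ^ i) = int p * s"
    using k by (simp add: s_def algebra_simps power2_eq_square)
  have s_not_dvd: "\<not> int p dvd s"
    using assms(1) zdvd_reduce by (auto simp: s_def)
  have "u ^ p - 1 = int p * (s * (u - 1))"
    by (simp add: power_diff_1_eq sum_eq algebra_simps)
  moreover have "s * (u - 1) \<noteq> 0"
    using s_not_dvd assms(4) by auto
  moreover have "\<not> is_unit (int p)" "int p \<noteq> 0"
    using assms(1) by auto
  ultimately have "multiplicity (int p) (u ^ p - 1) = Suc (multiplicity (int p) (s * (u - 1)))"
    by (simp add: multiplicity_times_same)
  also have "\<dots> = Suc (multiplicity (int p) (u - 1))"
    using assms(1) s_not_dvd by (simp add: multiplicity_prime_elem_times_other)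
  finally show ?thesis .
qed

theorem multiplicity_pow_sub_one:
  fixes p d :: nat and u :: int
  assumes p: "prime p" "odd p" and u: "int p dvd u - 1" "u \<noteq> 1" and "d > 0"
  shows "multiplicity (int p) (u ^ d - 1) = multiplicity (int p) (u - 1) + multiplicity p d"
proof -
  have p_dvd_pow: "int p dvd u ^ n - 1" for n
    using u(1) by (metis cong_iff_dvd_diff cong_pow cong_sym_eq power_one)
  have prime_pow: "multiplicity (int p) (u ^ (p ^ j) - 1) = multiplicity (int p) (u - 1) + j" for j
  proof (induction j)
    case (Suc j)
    have "multiplicity (int p) (u - 1) > 0"
      using u p(1) by (simp add: prime_multiplicity_gt_zero_iff)
    then have "u ^ (p ^ j) \<noteq> 1"
      using Suc.IH by auto
    then have "multiplicity (int p) ((u ^ (p ^ j)) ^ p - 1) = Suc (multiplicity (int p) (u ^ (p ^ j) - 1))"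
      using p p_dvd_pow by (intro multiplicity_pow_prime_sub_one)
    then show ?case
      using Suc.IH by (simp add: power_mult [symmetric] mult.commute)
  qed simp
  have "\<not> is_unit p"
    using p(1) not_prime_unit by blast
  then obtain d' where d': "d = p ^ multiplicity p d * d'" "\<not> p dvd d'"
    using multiplicity_decompose' \<open>d > 0\<close> by (metis not_gr0)
  then have "u ^ d - 1 = (u ^ (p ^ multiplicity p d)) ^ d' - 1"
    by (metis power_mult)
  also have "multiplicity (int p) \<dots> = multiplicity (int p) (u ^ (p ^ multiplicity p d) - 1)"
    using p(1) p_dvd_pow d'(2) by (intro multiplicity_pow_sub_one_coprime_exp)
  finally show ?thesis
    using prime_pow by simp
qed

corollary not_cong_pow_one_below:
  fixes p u d t :: nat
  assumes p: "prime p" "odd p" and u: "[u = 1] (mod p)" "u > 1" and d: "0 < d" "d < p ^ t"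
  shows "\<not> [u ^ d = 1] (mod p ^ (multiplicity (int p) (int u - 1) + t))"
proof
  let ?e = "multiplicity (int p) (int u - 1)"
  assume "[u ^ d = 1] (mod p ^ (?e + t))"
  then have dvd: "int p ^ (?e + t) dvd int u ^ d - 1"
    by (metis cong_iff_dvd_diff cong_int_iff cong_sym_eq of_nat_1 of_nat_power)
  have "int u ^ d > 1"
    using u(2) d(1) by simp
  with dvd p(1) have lower: "?e + t \<le> multiplicity (int p) (int u ^ d - 1)"
    by (intro multiplicity_geI) (auto simp: prime_gt_1_nat)
  have "p ^ multiplicity p d \<le> d"
    using d(1) by (simp add: dvd_imp_le multiplicity_dvd)
  then have "multiplicity p d < t"
    using d(2) p(1) by (meson le_less_trans power_less_imp_less_exp prime_gt_1_nat)
  moreover have "int p dvd int u - 1" "int u \<noteq> 1"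
    using u by (auto simp: cong_iff_dvd_diff cong_sym_eq simp flip: cong_int_iff)
  ultimately have "multiplicity (int p) (int u ^ d - 1) < ?e + t"
    using multiplicity_pow_sub_one[OF p _ _ d(1)] by simp
  with lower show False
    by simp
qed

definition num_large_low_digits :: "nat \<Rightarrow> nat \<Rightarrow> nat \<Rightarrow> nat" where
  "num_large_low_digits p t x = card {i. i < t \<and> large_digit p (digit p x i)}"

lemma num_large_low_digits_Suc:
  "num_large_low_digits p (Suc t) x =
     (if large_digit p (x mod p) then 1 else 0) + num_large_low_digits p t (x div p)"
proof -
  let ?L = "\<lambda>x i. large_digit p (digit p x i)"
  have digit_Suc: "digit p x (Suc i) = digit p (x div p) i" for i
    by (simp add: digit_def div_mult2_eq)
  have "{i. i < Suc t \<and> ?L x i} = (if ?L x 0 then {0} else {}) \<union> Suc ` {i. i < t \<and> ?L (x div p) i}"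
    by (auto simp: less_Suc_eq_0_disj digit_Suc)
  moreover have "digit p x 0 = x mod p"
    by (simp add: digit_def)
  ultimately show ?thesis
    by (simp add: num_large_low_digits_def card_image)
qed

lemma digit_window:
  assumes "p > 0" "i < t"
  shows "digit p ((m div p ^ e) mod p ^ t) i = digit p m (e + i)"
proof -
  have "p ^ t = p ^ i * p ^ (t - i)"
    using assms(2) by (simp flip: power_add)
  then have "(m div p ^ e) mod p ^ t div p ^ i = m div p ^ e div p ^ i mod p ^ (t - i)"
    using assms(1) by (simp add: mod_mult2_eq)
  moreover have "p dvd p ^ (t - i)"
    using assms by simp
  ultimately show ?thesis
    by (simp add: digit_def mod_mod_cancel div_mult2_eq power_add)
qed

lemma num_large_low_digits_window_le:
  assumes "p \<ge> 2"
  shows "num_large_low_digits p t ((m div p ^ e) mod p ^ t) \<le> num_large_digits p m"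
proof -
  let ?B = "{i. p ^ i \<le> m \<and> large_digit p (digit p m i)}"
  let ?W = "{i. i < t \<and> large_digit p (digit p m (e + i))}"
  have "?B \<subseteq> {..m}"
    using assms by (auto intro: order.trans[OF less_imp_le[OF less_exp]] order.trans[OF power_mono])
  then have "finite ?B"
    by (rule finite_subset) simp
  moreover have "(+) e ` ?W \<subseteq> ?B"
  proof
    fix k
    assume "k \<in> (+) e ` ?W"
    then have large: "large_digit p (digit p m k)"
      by auto
    then have "digit p m k \<noteq> 0"
      using assms by (auto simp: large_digit_def)
    then have "m div p ^ k \<noteq> 0"
      unfolding digit_def by (metis mod_0)
    then show "k \<in> ?B"
      using large assms by (simp add: div_eq_0_iff)
  qed
  ultimately have "card ((+) e ` ?W) \<le> card ?B"
    by (rule card_mono)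
  moreover have "num_large_low_digits p t ((m div p ^ e) mod p ^ t) = card ?W"
    unfolding num_large_low_digits_def using assms by (auto simp: digit_window intro!: arg_cong[where f = card])
  ultimately show ?thesis
    by (simp add: num_large_digits_def card_image)
qed

definition few_large_digits :: "nat \<Rightarrow> nat \<Rightarrow> nat \<Rightarrow> nat set" where
  "few_large_digits p t n = {x. x < p ^ t \<and> num_large_low_digits p t x < n}"

lemma finite_few_large_digits [simp]: "finite (few_large_digits p t n)"
  by (simp add: few_large_digits_def)

lemma large_digit_iff: "large_digit p d \<longleftrightarrow> (p + 1) div 2 \<le> d"
  unfolding large_digit_def by linarith

lemma card_few_large_digits_Suc_le:
  assumes "p > 0"
  shows "card (few_large_digits p (Suc t) (Suc n))
           \<le> (p + 1) div 2 * card (few_large_digits p t (Suc n)) + (p + 1) div 2 * card (few_large_digits p t n)"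
proof -
  define h where "h = (p + 1) div 2"
  let ?small = "{..<h} \<times> few_large_digits p t (Suc n)"
  let ?large = "{h..<p} \<times> few_large_digits p t n"
  have "few_large_digits p (Suc t) (Suc n) \<subseteq> (\<lambda>(d, y). d + p * y) ` (?small \<union> ?large)"
  proof
    fix x
    assume x: "x \<in> few_large_digits p (Suc t) (Suc n)"
    then have "x div p < p ^ t"
      using assms by (simp add: few_large_digits_def less_mult_imp_div_less mult.commute)
    with x have "(x mod p, x div p) \<in> ?small \<union> ?large"
      using assms
      by (cases "large_digit p (x mod p)")
        (simp_all add: few_large_digits_def num_large_low_digits_Suc large_digit_iff h_def)
    then show "x \<in> (\<lambda>(d, y). d + p * y) ` (?small \<union> ?large)"
      by (force intro: image_eqI[where x = "(x mod p, x div p)"])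
  qed
  then have "card (few_large_digits p (Suc t) (Suc n))
               \<le> card ((\<lambda>(d, y). d + p * y) ` (?small \<union> ?large))"
    by (intro card_mono) auto
  also have "\<dots> \<le> card (?small \<union> ?large)"
    by (rule card_image_le) auto
  also have "\<dots> \<le> card ?small + card ?large"
    by (rule card_Un_le)
  also have "\<dots> \<le> h * card (few_large_digits p t (Suc n)) + h * card (few_large_digits p t n)"
  proof -
    have "p - h \<le> h"
      unfolding h_def by presburger
    then show ?thesis
      by (simp add: card_cartesian_product h_def)
  qed
  finally show ?thesis
    unfolding h_def .
qed

lemma sum_binomial_Suc:
  "(\<Sum>k<Suc m. Suc t choose k) = (\<Sum>k<Suc m. t choose k) + (\<Sum>k<m. t choose k)"
  by (induction m) simp_all

lemma card_few_large_digits_le: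
  assumes "p > 0"
  shows "card (few_large_digits p t n) \<le> ((p + 1) div 2) ^ t * (\<Sum>k<n. t choose k)"
proof (induction t arbitrary: n)
  case 0
  have "few_large_digits p 0 n \<subseteq> {0}"
    by (auto simp: few_large_digits_def)
  then have "card (few_large_digits p 0 n) \<le> card {0 :: nat}"
    by (intro card_mono) simp_all
  moreover have "few_large_digits p 0 0 = {}"
    by (simp add: few_large_digits_def)
  ultimately show ?case
    by (cases n) (simp_all add: sum.lessThan_Suc_shift del: sum.lessThan_Suc)
next
  case (Suc t)
  let ?h = "(p + 1) div 2"
  show ?case
  proof (cases n)
    case (Suc m)
    have "card (few_large_digits p (Suc t) n)
            \<le> ?h * card (few_large_digits p t n) + ?h * card (few_large_digits p t m)"
      using card_few_large_digits_Suc_le[OF assms] Suc by simp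
    also have "\<dots> \<le> ?h * (?h ^ t * (\<Sum>k<n. t choose k)) + ?h * (?h ^ t * (\<Sum>k<m. t choose k))"
      using Suc.IH[of n] Suc.IH[of m] by (intro add_mono mult_le_mono2)
    also have "\<dots> = ?h ^ Suc t * ((\<Sum>k<n. t choose k) + (\<Sum>k<m. t choose k))"
      by (simp add: algebra_simps)
    also have "\<dots> = ?h ^ Suc t * (\<Sum>k<n. Suc t choose k)"
      using Suc by (simp only: sum_binomial_Suc)
    finally show ?thesis .
  qed (simp add: few_large_digits_def)
qed

lemma sum_power_le_twice_last:
  fixes t :: nat
  assumes "t \<ge> 2"
  shows "(\<Sum>k\<le>m. t ^ k) \<le> 2 * t ^ m"
proof (induction m)
  case (Suc m)
  have "2 * t ^ m \<le> t ^ Suc m"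
    using assms by simp
  then show ?case
    using Suc.IH unfolding sum.atMost_Suc by linarith
qed simp

lemma sum_binomial_le_pow2: "(\<Sum>k\<le>m. t choose k) \<le> 2 ^ t"
proof -
  have "(\<Sum>k\<le>m. t choose k) \<le> (\<Sum>k\<le>m + t. t choose k)"
    by (rule sum_mono2) auto
  also have "\<dots> = (\<Sum>k\<le>t. t choose k)"
    by (rule sum.mono_neutral_right) (auto simp: binomial_eq_0)
  finally show ?thesis
    by (simp add: choose_row_sum)
qed

lemma sum_binomial_le:
  assumes "t \<ge> 1"
  shows "(\<Sum>k\<le>m. t choose k) \<le> 2 * t ^ m"
proof (cases "t = 1")
  case True
  then show ?thesis
    using sum_binomial_le_pow2[of t m] by simp
next
  case False
  have "(\<Sum>k\<le>m. t choose k) \<le> (\<Sum>k\<le>m. t ^ k)"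
    by (intro sum_mono) (metis binomial_eq_0 binomial_le_pow not_le zero_le)
  also have "\<dots> \<le> 2 * t ^ m"
    using False assms by (intro sum_power_le_twice_last) simp
  finally show ?thesis .
qed

lemma cong_mult_modulus_of_div_mod:
  fixes a b m k :: nat
  assumes "[a = b] (mod m)" "a div m mod k = b div m mod k"
  shows "[a = b] (mod m * k)"
  using assms by (simp add: cong_def mod_mult2_eq)

lemma windows_of_powers_distinct:
  fixes p u x t q1 q2 :: nat
  assumes p: "prime p" "odd p" and u: "[u = 1] (mod p)" "u > 1" and x: "coprime x p"
    and q: "q1 < q2" "q2 < q1 + p ^ t"
  defines "e \<equiv> multiplicity (int p) (int u - 1)"
  shows "x * u ^ q1 div p ^ e mod p ^ t \<noteq> x * u ^ q2 div p ^ e mod p ^ t"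
proof
  assume window_eq: "x * u ^ q1 div p ^ e mod p ^ t = x * u ^ q2 div p ^ e mod p ^ t"
  have u_cong: "[u = 1] (mod p ^ e)"
    using multiplicity_dvd[of "int p" "int u - 1"]
    by (simp add: e_def cong_iff_dvd_diff cong_sym_eq flip: cong_int_iff)
  have "[x * u ^ q = x] (mod p ^ e)" for q
    using cong_scalar_left[OF cong_pow[OF u_cong, where n = q], where d = x] by simp
  then have "[x * u ^ q1 = x * u ^ q2] (mod p ^ e)"
    using cong_trans cong_sym by blast
  with window_eq have "[x * u ^ q1 = x * u ^ q2] (mod p ^ (e + t))"
    by (simp add: cong_mult_modulus_of_div_mod power_add)
  moreover have "x * u ^ q2 = x * u ^ q1 * u ^ (q2 - q1)"
    using q(1) by (simp flip: mult.assoc power_add)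
  moreover have "coprime (x * u ^ q1) (p ^ (e + t))"
    using x cong_imp_coprime[OF cong_sym[OF u(1)]] by (simp add: coprime_commute)
  ultimately have "[u ^ (q2 - q1) = 1] (mod p ^ (e + t))"
    by (metis cong_mult_lcancel_nat cong_sym mult_1_right)
  moreover have "0 < q2 - q1" "q2 - q1 < p ^ t"
    using q by auto
  ultimately show False
    using not_cong_pow_one_below[OF p u] by (simp add: e_def)
qed

lemma less_add_of_div_eq:
  fixes q1 q2 m :: nat
  assumes "q1 div m = q2 div m" "m > 0"
  shows "q2 < q1 + m"
proof -
  have "q2 = q2 div m * m + q2 mod m"
    by (rule div_mult_mod_eq[symmetric])
  also have "\<dots> < q2 div m * m + m"
    using mod_less_divisor[OF assms(2), of q2] by linarith
  also have "\<dots> = q1 div m * m + m"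
    using assms(1) by simp
  also have "\<dots> \<le> q1 + m"
    by (simp add: div_times_less_eq_dividend)
  finally show ?thesis .
qed

lemma windows_of_ord_powers_distinct:
  fixes p \<alpha> b t q1 q2 :: nat
  assumes p: "prime p" "odd p" and \<alpha>: "\<alpha> > 1" "coprime p \<alpha>"
    and q: "q1 < q2" "q1 div p ^ t = q2 div p ^ t"
  defines "e \<equiv> multiplicity (int p) (int (\<alpha> ^ ord p \<alpha>) - 1)"
  shows "\<alpha> ^ (b + ord p \<alpha> * q1) div p ^ e mod p ^ t
           \<noteq> \<alpha> ^ (b + ord p \<alpha> * q2) div p ^ e mod p ^ t"
proof -
  have "ord p \<alpha> > 0"
    using \<alpha>(2) by simp
  then have u: "[\<alpha> ^ ord p \<alpha> = 1] (mod p)" "\<alpha> ^ ord p \<alpha> > 1"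
    using ord[of \<alpha> p] one_less_power[OF \<alpha>(1)] by simp_all
  have "q2 < q1 + p ^ t"
    using q(2) p(1) by (intro less_add_of_div_eq) (simp_all add: prime_gt_0_nat)
  moreover have "coprime (\<alpha> ^ b) p"
    using \<alpha>(2) by (simp add: coprime_commute)
  ultimately show ?thesis
    using windows_of_powers_distinct[OF p u, of "\<alpha> ^ b" q1 q2 t] q(1)
    by (simp add: e_def power_add power_mult)
qed

lemma S_le_ord_mult_card_few_large_digits:
  fixes p \<alpha> n s t :: nat
  assumes p: "prime p" "odd p" and \<alpha>: "\<alpha> > 1" "coprime p \<alpha>"
  shows "S p \<alpha> n (s * ord p \<alpha> * p ^ t) \<le> ord p \<alpha> * s * card (few_large_digits p t n)"
proof -
  define \<gamma> where "\<gamma> = ord p \<alpha>"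
  define e where "e = multiplicity (int p) (int (\<alpha> ^ \<gamma>) - 1)"
  define window where "window j = \<alpha> ^ j div p ^ e mod p ^ t" for j
  define f where "f j = (j mod \<gamma>, j div \<gamma> div p ^ t, window j)" for j
  define T where "T = {j. j < s * \<gamma> * p ^ t \<and> num_large_digits p (\<alpha> ^ j) < n}"
  have "\<gamma> > 0" "p ^ t > 0"
    using \<alpha>(2) p(1) by (simp_all add: \<gamma>_def prime_gt_0_nat)
  have window_neq: "window (b + \<gamma> * q1) \<noteq> window (b + \<gamma> * q2)"
    if "q1 < q2" "q1 div p ^ t = q2 div p ^ t" for b q1 q2
    using windows_of_ord_powers_distinct[OF p \<alpha> that] by (simp add: window_def e_def \<gamma>_def)
  have "inj_on f T"
  proof (rule inj_onI)
    fix j1 j2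
    assume "f j1 = f j2"
    then have eq: "j1 mod \<gamma> = j2 mod \<gamma>" "j1 div \<gamma> div p ^ t = j2 div \<gamma> div p ^ t"
      "window j1 = window j2"
      by (simp_all add: f_def)
    have j: "j1 = j1 mod \<gamma> + \<gamma> * (j1 div \<gamma>)" "j2 = j1 mod \<gamma> + \<gamma> * (j2 div \<gamma>)"
      by (simp only: mod_mult_div_eq) (simp only: eq(1) mod_mult_div_eq)
    have "j1 div \<gamma> = j2 div \<gamma>"
      using window_neq[of "j1 div \<gamma>" "j2 div \<gamma>"] window_neq[of "j2 div \<gamma>" "j1 div \<gamma>"] eq j
      by (metis linorder_neqE_nat)
    then show "j1 = j2"
      using j by simp
  qed
  moreover have "f ` T \<subseteq> {..<\<gamma>} \<times> {..<s} \<times> few_large_digits p t n"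
  proof
    fix y
    assume "y \<in> f ` T"
    then obtain j where j: "j \<in> T" "y = f j"
      by blast
    then have "j < s * (\<gamma> * p ^ t)"
      by (simp add: T_def mult.assoc)
    then have "j div \<gamma> div p ^ t < s"
      by (simp add: less_mult_imp_div_less flip: div_mult2_eq)
    moreover have "num_large_low_digits p t (window j) \<le> num_large_digits p (\<alpha> ^ j)"
      unfolding window_def using p(1) by (intro num_large_low_digits_window_le) (simp add: prime_ge_2_nat)
    ultimately show "y \<in> {..<\<gamma>} \<times> {..<s} \<times> few_large_digits p t n"
      using j \<open>\<gamma> > 0\<close> \<open>p ^ t > 0\<close> by (auto simp: f_def T_def window_def few_large_digits_def)
  qed
  ultimately have "card T \<le> card ({..<\<gamma>} \<times> {..<s} \<times> few_large_digits p t n)"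
    by (intro card_inj_on_le) auto
  then show ?thesis
    by (simp add: S_def T_def \<gamma>_def card_cartesian_product)
qed

theorem lemma2p8:
  fixes p \<alpha> n s t :: nat
  assumes "prime p" and "odd p" and "\<alpha> > 1" and "coprime p \<alpha>"
    and "n \<ge> 1" and "t \<ge> 1"
  shows "real (S p \<alpha> n (s * ord p \<alpha> * p ^ t))
           \<le> 2 * real s * real (ord p \<alpha>) * real t ^ (n - 1) * ((real p + 1) / 2) ^ t"
proof -
  have half: "real ((p + 1) div 2) = (real p + 1) / 2"
    using \<open>odd p\<close> by (auto elim!: oddE)
  have "(\<Sum>k<n. t choose k) \<le> 2 * t ^ (n - 1)"
    using sum_binomial_le[OF \<open>t \<ge> 1\<close>, of "n - 1"] \<open>n \<ge> 1\<close> by (simp flip: lessThan_Suc_atMost)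
  then have "card (few_large_digits p t n) \<le> ((p + 1) div 2) ^ t * (2 * t ^ (n - 1))"
    using \<open>prime p\<close>
    by (intro order.trans[OF card_few_large_digits_le mult_le_mono2]) (simp_all add: prime_gt_0_nat)
  then have "S p \<alpha> n (s * ord p \<alpha> * p ^ t)
               \<le> ord p \<alpha> * s * (((p + 1) div 2) ^ t * (2 * t ^ (n - 1)))"
    by (intro order.trans[OF S_le_ord_mult_card_few_large_digits[OF assms(1-4)] mult_le_mono2])
  then have "real (S p \<alpha> n (s * ord p \<alpha> * p ^ t))
               \<le> real (ord p \<alpha> * s * (((p + 1) div 2) ^ t * (2 * t ^ (n - 1))))"
    by (rule of_nat_mono)
  also have "\<dots> = 2 * real s * real (ord p \<alpha>) * real t ^ (n - 1) * ((real p + 1) / 2) ^ t"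
    unfolding of_nat_mult of_nat_power half by (simp add: mult_ac)
  finally show ?thesis .
qed

end
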